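(* For every $d\in(0,1]$, the competitive ratio of \textsc{Threshold} with parameter $d$ for the graph orientation problem with uniform query costs (even with an exact vertex cover algorithm in step 4, and with ties among optimal basic feasible LP solutions in step 2 broken in the worst way) is at least $\max\{1+d,\ 1/d\}$, and hence at least the golden ratio $\phi=(1+\sqrt5)/2$.
   Context: An instance of the graph orientation problem consists of a graph $G=(V,E)$ and, for each vertex $v$, a query cost $c_v$ and a continuous distribution $d_v$ with minimal support interval $I_v$; weights are independent and querying $v$ reveals $w_v$ at cost $c_v$. For a realization, $Q$ is a feasible query set if knowing $w_u$ for $u\in Q$ and only the intervals for unqueried vertices suffices to identify, for every edge, its endpoint of minimum weight; $\mathbb E[\mathrm{OPT}]$ is the expected minimum cost of a feasible query set. A vertex is mandatory if it belongs to every feasible query set; $p_v$ is the probability that $v$ is mandatory. Uniform costs means $c_v=1$. The competitive ratio of an algorithm is the supremum over instances of (expected query cost)/$\mathbb E[\mathrm{OPT}]$. Algorithm \textsc{Threshold} with parameter $d$: (1) $M=\{v:p_v\ge d\}$; (2) compute an optimal basic feasible solution $x^*$ of the LP $\min\sum c_vx_v$ s.t. $x_u+x_v\ge1$ for every edge of $G[V\setminus M]$, $x\ge0$; (3) let $V_1,V_{1/2},V_0$ be the vertices of $V\setminus M$ with $x^*_v=1,\frac12,0$; (4) compute a vertex cover $VC'$ of $G[V_{1/2}]$; (5) query $Q=M\cup V_1\cup VC'$; (6) query every vertex of $V\setminus Q$ that is mandatory. *)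

theory Defs
  imports "HOL-Probability.Probability"
begin

text \<open>Instances: vertices are natural numbers, V a finite vertex set, E a set of
  2-element edges, D v the (absolutely continuous) distribution of w_v. Uniform costs.\<close>

definition support_interval :: "real measure \<Rightarrow> real set" where
  "support_interval \<mu> = {x. measure \<mu> {..<x} > 0 \<and> measure \<mu> {x<..} > 0}"

definition simple_graph :: "nat set \<Rightarrow> nat set set \<Rightarrow> bool" where
  "simple_graph V E \<longleftrightarrow> finite V \<and> (\<forall>e\<in>E. \<exists>u v. e = {u, v} \<and> u \<noteq> v \<and> u \<in> V \<and> v \<in> V)"

definition wf_instance :: "nat set \<Rightarrow> nat set set \<Rightarrow> (nat \<Rightarrow> real measure) \<Rightarrow> bool" where
  "wf_instance V E D \<longleftrightarrow> simple_graph V E \<and>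
     (\<forall>v\<in>V. prob_space (D v) \<and>
        (\<exists>f. f \<in> borel_measurable borel \<and> (\<forall>x. f x \<ge> 0) \<and>
             D v = density lborel (\<lambda>x. ennreal (f x)))) \<and>
     (\<forall>u v. {u, v} \<in> E \<longrightarrow> u \<noteq> v \<longrightarrow>
        support_interval (D u) \<inter> support_interval (D v) \<noteq> {})"

definition consistent :: "nat set \<Rightarrow> (nat \<Rightarrow> real measure) \<Rightarrow> (nat \<Rightarrow> real) \<Rightarrow> nat set
    \<Rightarrow> (nat \<Rightarrow> real) \<Rightarrow> bool" where
  "consistent V D w Q w' \<longleftrightarrow> (\<forall>x\<in>Q. w' x = w x) \<and>
     (\<forall>x\<in>V - Q. w' x \<in> support_interval (D x))"

definition feasible_query :: "nat set \<Rightarrow> nat set set \<Rightarrow> (nat \<Rightarrow> real measure) \<Rightarrow> (nat \<Rightarrow> real)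
    \<Rightarrow> nat set \<Rightarrow> bool" where
  "feasible_query V E D w Q \<longleftrightarrow> Q \<subseteq> V \<and>
     (\<forall>u v. {u, v} \<in> E \<longrightarrow> u \<noteq> v \<longrightarrow>
        (\<exists>a b. {a, b} = {u, v} \<and> (\<forall>w'. consistent V D w Q w' \<longrightarrow> w' a \<le> w' b)))"

definition opt_cost :: "nat set \<Rightarrow> nat set set \<Rightarrow> (nat \<Rightarrow> real measure) \<Rightarrow> (nat \<Rightarrow> real) \<Rightarrow> nat" where
  "opt_cost V E D w = Min (card ` {Q. feasible_query V E D w Q})"

definition mandatory :: "nat set \<Rightarrow> nat set set \<Rightarrow> (nat \<Rightarrow> real measure) \<Rightarrow> (nat \<Rightarrow> real)
    \<Rightarrow> nat \<Rightarrow> bool" where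
  "mandatory V E D w v \<longleftrightarrow> (\<forall>Q. feasible_query V E D w Q \<longrightarrow> v \<in> Q)"

definition realizations :: "nat set \<Rightarrow> (nat \<Rightarrow> real measure) \<Rightarrow> (nat \<Rightarrow> real) measure" where
  "realizations V D = PiM V D"

definition expected_opt :: "nat set \<Rightarrow> nat set set \<Rightarrow> (nat \<Rightarrow> real measure) \<Rightarrow> real" where
  "expected_opt V E D = (\<integral>w. real (opt_cost V E D w) \<partial>realizations V D)"

definition mand_prob :: "nat set \<Rightarrow> nat set set \<Rightarrow> (nat \<Rightarrow> real measure) \<Rightarrow> nat \<Rightarrow> real" where
  "mand_prob V E D v = measure (realizations V D)
      {w \<in> space (realizations V D). mandatory V E D w v}"

definition lp_feasible :: "nat set \<Rightarrow> nat set set \<Rightarrow> (nat \<Rightarrow> real) \<Rightarrow> bool" where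
  "lp_feasible W F x \<longleftrightarrow> (\<forall>v. v \<notin> W \<longrightarrow> x v = 0) \<and> (\<forall>v\<in>W. x v \<ge> 0) \<and>
     (\<forall>u v. {u, v} \<in> F \<longrightarrow> u \<noteq> v \<longrightarrow> x u + x v \<ge> 1)"

text \<open>Basic solution: x is the unique solution of its active constraints taken as equalities.\<close>
definition lp_basic :: "nat set \<Rightarrow> nat set set \<Rightarrow> (nat \<Rightarrow> real) \<Rightarrow> bool" where
  "lp_basic W F x \<longleftrightarrow> (\<forall>y. ((\<forall>v. v \<notin> W \<longrightarrow> y v = 0) \<and>
       (\<forall>v\<in>W. x v = 0 \<longrightarrow> y v = 0) \<and>
       (\<forall>u v. {u, v} \<in> F \<longrightarrow> u \<noteq> v \<longrightarrow> x u + x v = 1 \<longrightarrow> y u + y v = 1)) \<longrightarrow> y = x)"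

definition lp_optimal_bfs :: "nat set \<Rightarrow> nat set set \<Rightarrow> (nat \<Rightarrow> real) \<Rightarrow> bool" where
  "lp_optimal_bfs W F x \<longleftrightarrow> lp_feasible W F x \<and> lp_basic W F x \<and>
     (\<forall>y. lp_feasible W F y \<longrightarrow> (\<Sum>v\<in>W. x v) \<le> (\<Sum>v\<in>W. y v))"

definition induced_edges :: "nat set set \<Rightarrow> nat set \<Rightarrow> nat set set" where
  "induced_edges E W = {e \<in> E. e \<subseteq> W}"

definition is_vertex_cover :: "nat set \<Rightarrow> nat set set \<Rightarrow> nat set \<Rightarrow> bool" where
  "is_vertex_cover W F C \<longleftrightarrow> C \<subseteq> W \<and> (\<forall>e\<in>F. e \<inter> C \<noteq> {})"

definition is_min_vertex_cover :: "nat set \<Rightarrow> nat set set \<Rightarrow> nat set \<Rightarrow> bool" where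
  "is_min_vertex_cover W F C \<longleftrightarrow> is_vertex_cover W F C \<and>
     (\<forall>C'. is_vertex_cover W F C' \<longrightarrow> card C \<le> card C')"

definition exact_vc_alg :: "(nat set \<Rightarrow> nat set set \<Rightarrow> nat set) \<Rightarrow> bool" where
  "exact_vc_alg vc \<longleftrightarrow> (\<forall>W F. simple_graph W F \<longrightarrow> is_min_vertex_cover W F (vc W F))"

definition thr_M :: "real \<Rightarrow> nat set \<Rightarrow> nat set set \<Rightarrow> (nat \<Rightarrow> real measure) \<Rightarrow> nat set" where
  "thr_M d V E D = {v \<in> V. mand_prob V E D v \<ge> d}"

definition thr_Q :: "(nat set \<Rightarrow> nat set set \<Rightarrow> nat set) \<Rightarrow> real \<Rightarrow> nat set \<Rightarrow> nat set set
    \<Rightarrow> (nat \<Rightarrow> real measure) \<Rightarrow> (nat \<Rightarrow> real) \<Rightarrow> nat set" where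
  "thr_Q vc d V E D x =
     (let M = thr_M d V E D; W = V - M;
          V1 = {v \<in> W. x v = 1}; Vh = {v \<in> W. x v = 1/2}
      in M \<union> V1 \<union> vc Vh (induced_edges E Vh))"

definition thr_expected_cost :: "(nat set \<Rightarrow> nat set set \<Rightarrow> nat set) \<Rightarrow> real \<Rightarrow> nat set
    \<Rightarrow> nat set set \<Rightarrow> (nat \<Rightarrow> real measure) \<Rightarrow> (nat \<Rightarrow> real) \<Rightarrow> real" where
  "thr_expected_cost vc d V E D x =
     (let Q = thr_Q vc d V E D x in
      \<integral>w. real (card Q + card {v \<in> V - Q. mandatory V E D w v}) \<partial>realizations V D)"

definition threshold_ratio :: "(nat set \<Rightarrow> nat set set \<Rightarrow> nat set) \<Rightarrow> real \<Rightarrow> ereal" where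
  "threshold_ratio vc d = Sup {ereal (thr_expected_cost vc d V E D x / expected_opt V E D) | V E D x.
       wf_instance V E D \<and> expected_opt V E D > 0 \<and>
       lp_optimal_bfs (V - thr_M d V E D) (induced_edges E (V - thr_M d V E D)) x}"

end

theory Submission
  imports Defs "HOL-Real_Asymp.Real_Asymp"
begin

text \<open>Both bounds come from stars whose centre weight has support (0,3) and whose leaf weights
  have support (2,5): a leaf is mandatory exactly when the centre weight falls into (2,5), and the
  centre exactly when some leaf weight falls into (0,3). With k leaves, where the centre and each
  leaf land in [2,3] with probability d, every vertex is mandatory with probability at least d,
  so Threshold queries all k + 1 vertices, while OPT needs only the centre unless the centre lands
  in (2,5); hence E[OPT] \<le> 1 + k d and the ratio tends to 1/d. On a single edge whose endpoints
  are mandatory with probabilities q, r < d the set M is empty, and putting the LP value 1 on the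
  leaf is an optimal basic solution; Threshold then pays 1 + q against E[OPT] \<le> 1 + r, and
  letting q \<rightarrow> d, r \<rightarrow> 0 gives 1 + d.\<close>

section \<open>Expectations, product measures and limits\<close>

lemma (in prob_space) expectation_affine_indicator:
  assumes "A \<in> events"
  shows "expectation (\<lambda>x. c + r * indicator A x) = c + r * prob A"
  using assms by (simp add: integrable_real_indicator emeasure_eq_measure prob_space)

lemma measure_PiM_component:
  assumes "\<And>j. prob_space (M j)" and "i \<in> I" and "B \<in> sets (M i)"
  shows "measure (PiM I M) {w \<in> space (PiM I M). w i \<in> B} = measure (M i) B"
proof -
  have "measure (M i) B = measure (distr (PiM I M) (M i) (\<lambda>w. w i)) B"
    using distr_PiM_component[of I M i] assms by simp
  also have "\<dots> = measure (PiM I M) ((\<lambda>w. w i) -` B \<inter> space (PiM I M))"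
    using assms by (intro measure_distr) auto
  finally show ?thesis
    by (simp add: vimage_def Int_def conj_commute)
qed

lemma sets_PiM_component:
  assumes "i \<in> I" and "B \<in> sets (M i)"
  shows "{w \<in> space (PiM I M). w i \<in> B} \<in> sets (PiM I M)"
  using assms by measurable

lemma ereal_le_of_tendsto:
  assumes "f \<longlonglongrightarrow> c" and "\<And>n. n \<ge> N \<Longrightarrow> ereal (f n) \<le> T"
  shows "ereal c \<le> T"
  using assms by (intro LIMSEQ_le_const2[of "\<lambda>n. ereal (f n)"]) (auto intro: tendsto_ereal)

section \<open>Learning the orientation of an edge\<close>

lemma comparable_with_open_interval_iff:
  fixes x l u :: real
  assumes "l < u"
  shows "(\<forall>q\<in>{l<..<u}. x \<le> q) \<or> (\<forall>q\<in>{l<..<u}. q \<le> x) \<longleftrightarrow> x \<notin> {l<..<u}"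
proof
  assume comparable: "(\<forall>q\<in>{l<..<u}. x \<le> q) \<or> (\<forall>q\<in>{l<..<u}. q \<le> x)"
  show "x \<notin> {l<..<u}"
  proof
    assume "x \<in> {l<..<u}"
    then have "(l + x) / 2 \<in> {l<..<u} \<and> \<not> x \<le> (l + x) / 2"
      and "(x + u) / 2 \<in> {l<..<u} \<and> \<not> (x + u) / 2 \<le> x"
      by auto
    with comparable show False
      by blast
  qed
qed (use assms in force)

definition possible_values :: "(nat \<Rightarrow> real measure) \<Rightarrow> (nat \<Rightarrow> real) \<Rightarrow> nat set \<Rightarrow> nat \<Rightarrow> real set"
  where "possible_values D w Q x = (if x \<in> Q then {w x} else support_interval (D x))"

definition orientation_known :: "nat set \<Rightarrow> (nat \<Rightarrow> real measure) \<Rightarrow> (nat \<Rightarrow> real) \<Rightarrow> nat set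
    \<Rightarrow> nat \<Rightarrow> nat \<Rightarrow> bool" where
  "orientation_known V D w Q u v \<longleftrightarrow>
     (\<exists>a b. {a, b} = {u, v} \<and> (\<forall>w'. consistent V D w Q w' \<longrightarrow> w' a \<le> w' b))"

lemma feasible_query_iff_orientation_known:
  "feasible_query V E D w Q \<longleftrightarrow>
     Q \<subseteq> V \<and> (\<forall>u v. {u, v} \<in> E \<longrightarrow> u \<noteq> v \<longrightarrow> orientation_known V D w Q u v)"
  by (simp add: feasible_query_def orientation_known_def)

lemma orientation_known_doubleton_cong:
  "{u, v} = {u', v'} \<Longrightarrow> orientation_known V D w Q u v = orientation_known V D w Q u' v'"
  by (simp add: orientation_known_def)

text \<open>The values of two distinct vertices vary independently over the consistent realizations.\<close>
lemma consistent_le_iff: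
  assumes "a \<in> V" "b \<in> V" "a \<noteq> b" and nonempty: "\<forall>x\<in>V - Q. support_interval (D x) \<noteq> {}"
  shows "(\<forall>w'. consistent V D w Q w' \<longrightarrow> w' a \<le> w' b) \<longleftrightarrow>
         (\<forall>p\<in>possible_values D w Q a. \<forall>q\<in>possible_values D w Q b. p \<le> q)"
proof
  assume le: "\<forall>w'. consistent V D w Q w' \<longrightarrow> w' a \<le> w' b"
  show "\<forall>p\<in>possible_values D w Q a. \<forall>q\<in>possible_values D w Q b. p \<le> q"
  proof (intro ballI)
    fix p q assume p: "p \<in> possible_values D w Q a" and q: "q \<in> possible_values D w Q b"
    define w' where "w' x = (if x = a then p else if x = b then q
        else if x \<in> Q then w x else SOME y. y \<in> support_interval (D x))" for x
    have "consistent V D w Q w'"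
      using p q nonempty \<open>a \<noteq> b\<close>
      by (auto simp: consistent_def w'_def possible_values_def some_in_eq split: if_splits)
    with le show "p \<le> q"
      using \<open>a \<noteq> b\<close> by (auto simp: w'_def)
  qed
next
  assume "\<forall>p\<in>possible_values D w Q a. \<forall>q\<in>possible_values D w Q b. p \<le> q"
  moreover have "w' x \<in> possible_values D w Q x" if "consistent V D w Q w'" "x \<in> V" for w' x
    using that by (auto simp: consistent_def possible_values_def)
  ultimately show "\<forall>w'. consistent V D w Q w' \<longrightarrow> w' a \<le> w' b"
    using assms(1,2) by blast
qed

lemma orientation_known_iff:
  assumes "u \<in> V" "v \<in> V" "u \<noteq> v" and "\<forall>x\<in>V - Q. support_interval (D x) \<noteq> {}"
  shows "orientation_known V D w Q u v \<longleftrightarrow>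
    (\<forall>p\<in>possible_values D w Q u. \<forall>q\<in>possible_values D w Q v. p \<le> q) \<or>
    (\<forall>p\<in>possible_values D w Q v. \<forall>q\<in>possible_values D w Q u. p \<le> q)"
proof -
  have "orientation_known V D w Q u v \<longleftrightarrow> (\<forall>w'. consistent V D w Q w' \<longrightarrow> w' u \<le> w' v) \<or>
      (\<forall>w'. consistent V D w Q w' \<longrightarrow> w' v \<le> w' u)"
    unfolding orientation_known_def by (auto simp: doubleton_eq_iff)
  then show ?thesis
    using consistent_le_iff[OF assms] consistent_le_iff[OF assms(2,1) assms(3)[symmetric] assms(4)]
    by simp
qed

section \<open>Mixtures of two uniform blocks\<close>

definition two_block_density :: "real \<Rightarrow> real \<Rightarrow> real \<Rightarrow> real \<Rightarrow> real" where
  "two_block_density p s t x = p * indicator {s..s+1} x + (1 - p) * indicator {t..t+1} x"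

definition two_block :: "real \<Rightarrow> real \<Rightarrow> real \<Rightarrow> real measure" where
  "two_block p s t = density lborel (\<lambda>x. ennreal (two_block_density p s t x))"

lemma two_block_density_measurable [measurable]: "two_block_density p s t \<in> borel_measurable borel"
  unfolding two_block_density_def by measurable

lemma two_block_density_nonneg: "0 \<le> p \<Longrightarrow> p \<le> 1 \<Longrightarrow> 0 \<le> two_block_density p s t x"
  unfolding two_block_density_def by (auto simp: indicator_def)

lemma sets_two_block: "sets (two_block p s t) = sets borel"
  by (simp add: two_block_def)

lemma emeasure_two_block:
  assumes "0 \<le> p" "p \<le> 1" "B \<in> sets borel"
  shows "emeasure (two_block p s t) B = ennreal p * emeasure lborel ({s..s+1} \<inter> B)
          + ennreal (1 - p) * emeasure lborel ({t..t+1} \<inter> B)"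
proof -
  have "emeasure (two_block p s t) B = (\<integral>\<^sup>+ x. ennreal (two_block_density p s t x) * indicator B x \<partial>lborel)"
    unfolding two_block_def using assms by (subst emeasure_density) auto
  also have "\<dots> = (\<integral>\<^sup>+ x. ennreal p * indicator ({s..s+1} \<inter> B) x
        + ennreal (1 - p) * indicator ({t..t+1} \<inter> B) x \<partial>lborel)"
    using assms by (intro nn_integral_cong) (auto simp: two_block_density_def indicator_def ennreal_mult)
  also have "\<dots> = ennreal p * emeasure lborel ({s..s+1} \<inter> B)
          + ennreal (1 - p) * emeasure lborel ({t..t+1} \<inter> B)"
    using assms by (subst nn_integral_add) (auto simp: nn_integral_cmult_indicator)
  finally show ?thesis .
qed

lemma prob_space_two_block:
  assumes "0 \<le> p" "p \<le> 1" "s + 1 \<le> t"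
  shows "prob_space (two_block p s t)"
proof
  have "{s..s+1} \<inter> space (two_block p s t) = {s..s+1}" "{t..t+1} \<inter> space (two_block p s t) = {t..t+1}"
    by (auto simp: two_block_def)
  then show "emeasure (two_block p s t) (space (two_block p s t)) = 1"
    using assms by (subst emeasure_two_block) (auto simp: two_block_def simp flip: ennreal_plus)
qed

lemma emeasure_two_block_lessThan_pos_iff:
  assumes "0 < p" "p < 1" and "s + 1 \<le> t"
  shows "emeasure (two_block p s t) {..<x} > 0 \<longleftrightarrow> s < x"
proof
  assume "s < x"
  have "0 < ennreal p * emeasure lborel {s<..<min (s+1) x}"
    using assms \<open>s < x\<close> by (simp add: ennreal_zero_less_mult_iff)
  also have "\<dots> \<le> ennreal p * emeasure lborel ({s..s+1} \<inter> {..<x})"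
    by (intro mult_left_mono emeasure_mono) auto
  also have "\<dots> \<le> emeasure (two_block p s t) {..<x}"
    using assms by (subst emeasure_two_block) auto
  finally show "emeasure (two_block p s t) {..<x} > 0" .
next
  assume "emeasure (two_block p s t) {..<x} > 0"
  moreover have "emeasure (two_block p s t) {..<x} = 0" if "x \<le> s"
  proof -
    have "{s..s+1} \<inter> {..<x} = {}" "{t..t+1} \<inter> {..<x} = {}"
      using that assms by auto
    then show ?thesis
      using assms by (simp add: emeasure_two_block)
  qed
  ultimately show "s < x"
    by force
qed

lemma emeasure_two_block_greaterThan_pos_iff:
  assumes "0 < p" "p < 1" and "s + 1 \<le> t"
  shows "emeasure (two_block p s t) {x<..} > 0 \<longleftrightarrow> x < t + 1"
proof
  assume "x < t + 1"
  have "0 < ennreal (1 - p) * emeasure lborel {max t x<..<t+1}"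
    using assms \<open>x < t + 1\<close> by (simp add: ennreal_zero_less_mult_iff)
  also have "\<dots> \<le> ennreal (1 - p) * emeasure lborel ({t..t+1} \<inter> {x<..})"
    by (intro mult_left_mono emeasure_mono) auto
  also have "\<dots> \<le> emeasure (two_block p s t) {x<..}"
    using assms by (subst emeasure_two_block) auto
  finally show "emeasure (two_block p s t) {x<..} > 0" .
next
  assume "emeasure (two_block p s t) {x<..} > 0"
  moreover have "emeasure (two_block p s t) {x<..} = 0" if "t + 1 \<le> x"
  proof -
    have "{s..s+1} \<inter> {x<..} = {}" "{t..t+1} \<inter> {x<..} = {}"
      using that assms by auto
    then show ?thesis
      using assms by (simp add: emeasure_two_block)
  qed
  ultimately show "x < t + 1"
    by force
qed

lemma support_two_block:
  assumes "0 < p" "p < 1" and "s + 1 \<le> t"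
  shows "support_interval (two_block p s t) = {s<..<t+1}"
proof -
  interpret prob_space "two_block p s t"
    using assms by (intro prob_space_two_block) auto
  show ?thesis
    using emeasure_two_block_lessThan_pos_iff[OF assms] emeasure_two_block_greaterThan_pos_iff[OF assms]
    by (auto simp: support_interval_def emeasure_eq_measure)
qed

section \<open>Star instances\<close>

definition centre_support :: "real set" where "centre_support = {0<..<3}"
definition leaf_support :: "real set" where "leaf_support = {2<..<5}"

definition centre_dist :: "real \<Rightarrow> real measure" where "centre_dist a = two_block a 0 2"
definition leaf_dist :: "real \<Rightarrow> real measure" where "leaf_dist b = two_block b 2 4"

lemma support_centre_dist: "0 < a \<Longrightarrow> a < 1 \<Longrightarrow> support_interval (centre_dist a) = centre_support"
  by (simp add: centre_dist_def centre_support_def support_two_block)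

lemma support_leaf_dist: "0 < b \<Longrightarrow> b < 1 \<Longrightarrow> support_interval (leaf_dist b) = leaf_support"
  by (simp add: leaf_dist_def leaf_support_def support_two_block)

lemma prob_space_centre_dist: "0 < a \<Longrightarrow> a < 1 \<Longrightarrow> prob_space (centre_dist a)"
  unfolding centre_dist_def by (intro prob_space_two_block) auto

lemma prob_space_leaf_dist: "0 < b \<Longrightarrow> b < 1 \<Longrightarrow> prob_space (leaf_dist b)"
  unfolding leaf_dist_def by (intro prob_space_two_block) auto

lemma measure_centre_dist_leaf_support:
  assumes "0 < a" "a < 1"
  shows "measure (centre_dist a) leaf_support = 1 - a"
proof -
  interpret prob_space "centre_dist a"
    using assms by (rule prob_space_centre_dist)
  have "{0..1} \<inter> {2<..<5} = ({}::real set)" "{2..3} \<inter> {2<..<5} = {2<..(3::real)}"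
    by auto
  then have "emeasure (centre_dist a) leaf_support = ennreal (1 - a)"
    unfolding centre_dist_def leaf_support_def using assms
    by (subst emeasure_two_block) (auto simp del: greaterThanLessThan_iff)
  then show ?thesis
    using assms by (simp add: emeasure_eq_measure)
qed

lemma measure_leaf_dist_centre_support:
  assumes "0 < b" "b < 1"
  shows "measure (leaf_dist b) centre_support = b"
proof -
  interpret prob_space "leaf_dist b"
    using assms by (rule prob_space_leaf_dist)
  have "{4..5} \<inter> {0<..<3} = ({}::real set)" "{2..3} \<inter> {0<..<3} = {2..<(3::real)}"
    by auto
  then have "emeasure (leaf_dist b) centre_support = ennreal b"
    unfolding leaf_dist_def centre_support_def using assms
    by (subst emeasure_two_block) (auto simp del: greaterThanLessThan_iff)
  then show ?thesis
    using assms by (simp add: emeasure_eq_measure)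
qed

definition star_vertices :: "nat \<Rightarrow> nat set" where "star_vertices k = {0..k}"
definition star_edges :: "nat \<Rightarrow> nat set set" where "star_edges k = (\<lambda>i. {0, i}) ` {1..k}"
definition star_dists :: "real \<Rightarrow> real \<Rightarrow> nat \<Rightarrow> real measure" where
  "star_dists a b i = (if i = 0 then centre_dist a else leaf_dist b)"

definition edge_settled :: "(nat \<Rightarrow> real) \<Rightarrow> nat set \<Rightarrow> nat \<Rightarrow> bool" where
  "edge_settled w Q i \<longleftrightarrow>
     (0 \<in> Q \<and> i \<in> Q) \<or> (0 \<in> Q \<and> w 0 \<notin> leaf_support) \<or> (i \<in> Q \<and> w i \<notin> centre_support)"

lemma star_edge_iff: "{u, v} \<in> star_edges k \<and> u \<noteq> v \<longleftrightarrow> (\<exists>i\<in>{1..k}. {u, v} = {0, i})"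
proof
  assume "\<exists>i\<in>{1..k}. {u, v} = {0, i}"
  then obtain i where i: "i \<in> {1..k}" "{u, v} = {0, i}"
    by blast
  then have "u \<noteq> v"
    by (auto simp: doubleton_eq_iff)
  with i show "{u, v} \<in> star_edges k \<and> u \<noteq> v"
    unfolding star_edges_def by (simp add: image_eqI)
qed (auto simp: star_edges_def)

lemma simple_graph_star: "simple_graph (star_vertices k) (star_edges k)"
  unfolding simple_graph_def star_edges_def star_vertices_def by fastforce

locale star_instance =
  fixes a b :: real and k :: nat
  assumes a: "0 < a" "a < 1" and b: "0 < b" "b < 1" and k: "1 \<le> k"
begin

abbreviation "V \<equiv> star_vertices k"
abbreviation "E \<equiv> star_edges k"
abbreviation "D \<equiv> star_dists a b"

lemma support_star_dists: "support_interval (D i) = (if i = 0 then centre_support else leaf_support)"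
  using a b by (simp add: star_dists_def support_centre_dist support_leaf_dist)

lemma orientation_known_star_iff:
  assumes i: "i \<in> {1..k}"
  shows "orientation_known V D w Q 0 i \<longleftrightarrow> edge_settled w Q i"
proof -
  have nonempty: "\<forall>x\<in>V - Q. support_interval (D x) \<noteq> {}"
    by (auto simp: support_star_dists centre_support_def leaf_support_def)
  have "(5/2::real) \<in> centre_support" "(5/2::real) \<in> leaf_support"
    "(11/4::real) \<in> centre_support" "(11/4::real) \<in> leaf_support"
    by (auto simp: centre_support_def leaf_support_def)
  then have incomparable: "\<not> (\<forall>p\<in>centre_support. \<forall>q\<in>leaf_support. p \<le> q)"
    "\<not> (\<forall>p\<in>leaf_support. \<forall>q\<in>centre_support. p \<le> q)"
    by fastforce+
  have "orientation_known V D w Q 0 i \<longleftrightarrow>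
    (\<forall>p\<in>possible_values D w Q 0. \<forall>q\<in>possible_values D w Q i. p \<le> q) \<or>
    (\<forall>p\<in>possible_values D w Q i. \<forall>q\<in>possible_values D w Q 0. p \<le> q)"
    using i nonempty by (intro orientation_known_iff) (auto simp: star_vertices_def)
  also have "\<dots> \<longleftrightarrow> edge_settled w Q i"
  proof (cases "0 \<in> Q"; cases "i \<in> Q")
    assume "0 \<in> Q" "i \<in> Q"
    then show ?thesis
      using i by (auto simp: possible_values_def edge_settled_def)
  next
    assume "0 \<in> Q" "i \<notin> Q"
    then show ?thesis
      using i comparable_with_open_interval_iff[of 2 5 "w 0", folded leaf_support_def]
      by (simp add: possible_values_def support_star_dists edge_settled_def)
  next
    assume "0 \<notin> Q" "i \<in> Q"
    then show ?thesis
      using i comparable_with_open_interval_iff[of 0 3 "w i", folded centre_support_def]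
      by (auto simp: possible_values_def support_star_dists edge_settled_def)
  next
    assume "0 \<notin> Q" "i \<notin> Q"
    then show ?thesis
      using i incomparable by (simp add: possible_values_def support_star_dists edge_settled_def)
  qed
  finally show ?thesis .
qed

lemma feasible_query_star_iff:
  "feasible_query V E D w Q \<longleftrightarrow> Q \<subseteq> V \<and> (\<forall>i\<in>{1..k}. edge_settled w Q i)"
proof -
  have "(\<forall>u v. {u, v} \<in> E \<longrightarrow> u \<noteq> v \<longrightarrow> orientation_known V D w Q u v) \<longleftrightarrow>
      (\<forall>i\<in>{1..k}. orientation_known V D w Q 0 i)"
  proof (intro iffI allI impI ballI)
    fix i assume all: "\<forall>u v. {u, v} \<in> E \<longrightarrow> u \<noteq> v \<longrightarrow> orientation_known V D w Q u v"
      and i: "i \<in> {1..k}"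
    have "{0, i} \<in> E" "0 \<noteq> i"
      using star_edge_iff[of 0 i k] i by blast+
    with all show "orientation_known V D w Q 0 i"
      by blast
  next
    fix u v assume all: "\<forall>i\<in>{1..k}. orientation_known V D w Q 0 i" and "{u, v} \<in> E" "u \<noteq> v"
    then obtain i where i: "i \<in> {1..k}" "{u, v} = {0, i}"
      using star_edge_iff[of u v k] by blast
    with all show "orientation_known V D w Q u v"
      using orientation_known_doubleton_cong[OF i(2)] by blast
  qed
  then show ?thesis
    by (simp add: feasible_query_iff_orientation_known orientation_known_star_iff)
qed

lemma feasible_centre: "w 0 \<notin> leaf_support \<Longrightarrow> feasible_query V E D w {0}"
  unfolding feasible_query_star_iff by (auto simp: edge_settled_def star_vertices_def)

lemma feasible_leaves: "\<forall>i\<in>{1..k}. w i \<notin> centre_support \<Longrightarrow> feasible_query V E D w {1..k}"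
  unfolding feasible_query_star_iff by (auto simp: edge_settled_def star_vertices_def)

lemma feasible_all: "feasible_query V E D w V"
  unfolding feasible_query_star_iff by (auto simp: edge_settled_def star_vertices_def)

lemma mandatory_leaf_iff:
  assumes "j \<in> {1..k}"
  shows "mandatory V E D w j \<longleftrightarrow> w 0 \<in> leaf_support"
proof
  assume "mandatory V E D w j"
  then show "w 0 \<in> leaf_support"
    using feasible_centre assms by (force simp: mandatory_def)
next
  assume "w 0 \<in> leaf_support"
  then show "mandatory V E D w j"
    using assms by (auto simp: mandatory_def feasible_query_star_iff edge_settled_def)
qed

lemma mandatory_centre_iff: "mandatory V E D w 0 \<longleftrightarrow> (\<exists>i\<in>{1..k}. w i \<in> centre_support)"
proof
  assume "mandatory V E D w 0"
  then show "\<exists>i\<in>{1..k}. w i \<in> centre_support"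
    using feasible_leaves by (force simp: mandatory_def)
next
  assume "\<exists>i\<in>{1..k}. w i \<in> centre_support"
  then show "mandatory V E D w 0"
    by (auto simp: mandatory_def feasible_query_star_iff edge_settled_def)
qed

lemma card_feasible_query_ge:
  assumes "feasible_query V E D w Q"
  shows "(if w 0 \<in> leaf_support then
     (if \<exists>i\<in>{1..k}. w i \<in> centre_support then k + 1 else k) else 1) \<le> card Q"
proof -
  have Q: "Q \<subseteq> V" and settled: "\<forall>i\<in>{1..k}. edge_settled w Q i"
    using assms unfolding feasible_query_star_iff by auto
  then have "finite Q"
    by (auto simp: star_vertices_def intro: finite_subset)
  show ?thesis
  proof (cases "w 0 \<in> leaf_support")
    case True
    then have leaves: "{1..k} \<subseteq> Q"
      using settled by (auto simp: edge_settled_def)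
    show ?thesis
    proof (cases "\<exists>i\<in>{1..k}. w i \<in> centre_support")
      case centre: True
      then have "0 \<in> Q"
        using settled by (auto simp: edge_settled_def)
      have "V \<subseteq> Q"
      proof
        fix x assume "x \<in> V"
        with leaves \<open>0 \<in> Q\<close> show "x \<in> Q"
          by (cases "x = 0") (auto simp: star_vertices_def)
      qed
      with Q have "Q = V"
        by blast
      then show ?thesis
        by (simp add: star_vertices_def)
    next
      case False
      then show ?thesis
        using True card_mono[OF \<open>finite Q\<close> leaves] by simp
    qed
  next
    case False
    have "Q \<noteq> {}"
      using settled k by (auto simp: edge_settled_def)
    then show ?thesis
      using False \<open>finite Q\<close> by (simp add: Suc_le_eq card_gt_0_iff)
  qed
qed

lemma opt_cost_star:
  "opt_cost V E D w = (if w 0 \<in> leaf_support then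
     (if \<exists>i\<in>{1..k}. w i \<in> centre_support then k + 1 else k) else 1)"
  (is "_ = ?c")
  unfolding opt_cost_def
proof (rule Min_eqI)
  have "{Q. feasible_query V E D w Q} \<subseteq> Pow V"
    by (auto simp: feasible_query_star_iff)
  then show "finite (card ` {Q. feasible_query V E D w Q})"
    by (auto intro: finite_subset simp: star_vertices_def)
next
  show "y \<in> card ` {Q. feasible_query V E D w Q} \<Longrightarrow> ?c \<le> y" for y
    using card_feasible_query_ge by blast
next
  show "?c \<in> card ` {Q. feasible_query V E D w Q}"
    using feasible_centre[of w] feasible_leaves[of w] feasible_all
    by (auto intro: image_eqI[where x = "{0}"] image_eqI[where x = "{1..k}"] image_eqI[where x = V]
        simp: star_vertices_def)
qed

abbreviation "P \<equiv> PiM V D"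

lemma prob_space_star_dists: "prob_space (D i)"
  using a b by (simp add: star_dists_def prob_space_centre_dist prob_space_leaf_dist)

lemma sets_star_dists: "sets (D i) = sets borel"
  by (simp add: star_dists_def centre_dist_def leaf_dist_def sets_two_block)

lemma prob_space_realizations: "prob_space P"
  by (intro prob_space_PiM prob_space_star_dists)

lemma borel_supports: "leaf_support \<in> sets (D i)" "centre_support \<in> sets (D i)"
  by (simp_all add: sets_star_dists leaf_support_def centre_support_def)

lemma events_star:
  "{w \<in> space P. w 0 \<in> leaf_support} \<in> sets P"
  "i \<in> V \<Longrightarrow> {w \<in> space P. w i \<in> centre_support} \<in> sets P"
  "{w \<in> space P. \<exists>i\<in>{1..k}. w i \<in> centre_support} \<in> sets P"
proof -
  show "{w \<in> space P. w 0 \<in> leaf_support} \<in> sets P"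
    using borel_supports by (intro sets_PiM_component) (auto simp: star_vertices_def)
  show leaf: "{w \<in> space P. w i \<in> centre_support} \<in> sets P" if "i \<in> V" for i
    using borel_supports that by (intro sets_PiM_component)
  have "{w \<in> space P. \<exists>i\<in>{1..k}. w i \<in> centre_support} =
      (\<Union>i\<in>{1..k}. {w \<in> space P. w i \<in> centre_support})"
    by blast
  also have "\<dots> \<in> sets P"
    using leaf by (intro sets.finite_UN) (auto simp: star_vertices_def)
  finally show "{w \<in> space P. \<exists>i\<in>{1..k}. w i \<in> centre_support} \<in> sets P" .
qed

lemma prob_centre_in_leaf_support: "measure P {w \<in> space P. w 0 \<in> leaf_support} = 1 - a"
proof -
  have "measure P {w \<in> space P. w 0 \<in> leaf_support} = measure (D 0) leaf_support"
    using prob_space_star_dists borel_supports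
    by (intro measure_PiM_component) (auto simp: star_vertices_def)
  also have "\<dots> = 1 - a"
    using a by (simp add: star_dists_def measure_centre_dist_leaf_support)
  finally show ?thesis .
qed

lemma prob_leaf_in_centre_support:
  assumes "i \<in> {1..k}"
  shows "measure P {w \<in> space P. w i \<in> centre_support} = b"
proof -
  have "measure P {w \<in> space P. w i \<in> centre_support} = measure (D i) centre_support"
    using prob_space_star_dists borel_supports assms
    by (intro measure_PiM_component) (auto simp: star_vertices_def)
  also have "\<dots> = b"
    using b assms by (simp add: star_dists_def measure_leaf_dist_centre_support)
  finally show ?thesis .
qed

lemma mand_prob_leaf: "j \<in> {1..k} \<Longrightarrow> mand_prob V E D j = 1 - a"
  by (simp add: mand_prob_def realizations_def mandatory_leaf_iff prob_centre_in_leaf_support)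

lemma mand_prob_centre_ge: "b \<le> mand_prob V E D 0"
proof -
  interpret prob_space P
    by (rule prob_space_realizations)
  have "b = measure P {w \<in> space P. w 1 \<in> centre_support}"
    using k by (simp add: prob_leaf_in_centre_support)
  also have "\<dots> \<le> measure P {w \<in> space P. \<exists>i\<in>{1..k}. w i \<in> centre_support}"
    using k events_star(3) by (intro finite_measure_mono) auto
  also have "\<dots> = mand_prob V E D 0"
    by (simp add: mand_prob_def realizations_def mandatory_centre_iff)
  finally show ?thesis .
qed

lemma mand_prob_centre_single_leaf:
  assumes "k = 1"
  shows "mand_prob V E D 0 = b"
proof -
  have "mandatory V E D w 0 \<longleftrightarrow> w 1 \<in> centre_support" for w
    using mandatory_centre_iff[of w] assms by simp
  then have "{w \<in> space P. mandatory V E D w 0} = {w \<in> space P. w 1 \<in> centre_support}"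
    by blast
  then show ?thesis
    using assms prob_leaf_in_centre_support[of 1] by (simp add: mand_prob_def realizations_def)
qed

lemma opt_cost_measurable: "(\<lambda>w. real (opt_cost V E D w)) \<in> borel_measurable P"
proof -
  have "(\<lambda>w. real (opt_cost V E D w)) = (\<lambda>w. if w 0 \<in> leaf_support then
      (if \<exists>i\<in>{1..k}. w i \<in> centre_support then real k + 1 else real k) else 1)"
    by (simp add: opt_cost_star fun_eq_iff)
  then show ?thesis
    using events_star by (simp only:) (intro measurable_If measurable_const; simp)
qed

lemma expected_opt_bounds: "1 \<le> expected_opt V E D" "expected_opt V E D \<le> 1 + real k * (1 - a)"
proof -
  interpret prob_space P
    by (rule prob_space_realizations)
  have integrable: "integrable P (\<lambda>w. real (opt_cost V E D w))"
    using opt_cost_measurable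
    by (intro integrable_const_bound[where B = "real k + 1"]) (auto simp: opt_cost_star)
  have "expectation (\<lambda>w. 1) \<le> expectation (\<lambda>w. real (opt_cost V E D w))"
    using integrable k by (intro integral_mono) (auto simp: opt_cost_star)
  then show "1 \<le> expected_opt V E D"
    by (simp add: expected_opt_def realizations_def prob_space)
  let ?L = "{w \<in> space P. w 0 \<in> leaf_support}"
  have "expectation (\<lambda>w. real (opt_cost V E D w)) \<le> expectation (\<lambda>w. 1 + real k * indicator ?L w)"
    using integrable events_star(1)
    by (intro integral_mono) (auto simp: opt_cost_star integrable_real_indicator emeasure_eq_measure)
  also have "\<dots> = 1 + real k * (1 - a)"
    using events_star(1) by (simp add: expectation_affine_indicator prob_centre_in_leaf_support)
  finally show "expected_opt V E D \<le> 1 + real k * (1 - a)"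
    by (simp add: expected_opt_def realizations_def)
qed

lemma expected_cost_leaf_then_centre:
  assumes "k = 1"
  shows "(\<integral>w. real (card {1::nat} + card {v \<in> V - {1}. mandatory V E D w v}) \<partial>P) = 1 + b"
proof -
  interpret prob_space P
    by (rule prob_space_realizations)
  let ?C = "{w \<in> space P. w 1 \<in> centre_support}"
  have "V - {1} = {0}"
    using assms by (auto simp: star_vertices_def)
  then have "{v \<in> V - {1}. mandatory V E D w v} = (if w 1 \<in> centre_support then {0} else {})" for w
    using mandatory_centre_iff[of w] assms by (simp only:) auto
  then have "real (card {1::nat} + card {v \<in> V - {1}. mandatory V E D w v}) = 1 + 1 * indicator ?C w"
    if "w \<in> space P" for w
    using that by (simp add: indicator_def)
  then have "(\<integral>w. real (card {1::nat} + card {v \<in> V - {1}. mandatory V E D w v}) \<partial>P) =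
      expectation (\<lambda>w. 1 + 1 * indicator ?C w)"
    by (rule Bochner_Integration.integral_cong[OF refl])
  also have "\<dots> = 1 + 1 * prob ?C"
    using k events_star(2)[of 1] by (intro expectation_affine_indicator) (simp add: star_vertices_def)
  also have "\<dots> = 1 + b"
    using k prob_leaf_in_centre_support[of 1] by simp
  finally show ?thesis .
qed

lemma wf_instance_star: "wf_instance V E D"
  unfolding wf_instance_def
proof (intro conjI ballI allI impI)
  show "simple_graph V E"
    by (rule simple_graph_star)
next
  fix v
  show "prob_space (D v)"
    by (rule prob_space_star_dists)
  show "\<exists>f. f \<in> borel_measurable borel \<and> (\<forall>x. 0 \<le> f x) \<and> D v = density lborel (\<lambda>x. ennreal (f x))"
  proof (cases "v = 0")
    case True
    then show ?thesis
      using a two_block_density_nonneg[of a]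
      by (intro exI[of _ "two_block_density a 0 2"]) (simp add: star_dists_def centre_dist_def two_block_def)
  next
    case False
    then show ?thesis
      using b two_block_density_nonneg[of b]
      by (intro exI[of _ "two_block_density b 2 4"]) (simp add: star_dists_def leaf_dist_def two_block_def)
  qed
next
  fix u v assume "{u, v} \<in> E" "u \<noteq> v"
  then obtain i where "i \<in> {1..k}" "{u, v} = {0, i}"
    using star_edge_iff by blast
  then have "u = 0 \<and> v \<noteq> 0 \<or> u \<noteq> 0 \<and> v = 0"
    by (auto simp: doubleton_eq_iff)
  moreover have "5/2 \<in> centre_support \<inter> leaf_support"
    by (simp add: centre_support_def leaf_support_def)
  ultimately show "support_interval (D u) \<inter> support_interval (D v) \<noteq> {}"
    by (auto simp: support_star_dists)
qed

end

section \<open>Lower bounds for Threshold\<close>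

lemma lp_optimal_bfs_empty: "lp_optimal_bfs {} {} (\<lambda>_. 0)"
  by (simp add: lp_optimal_bfs_def lp_feasible_def lp_basic_def fun_eq_iff)

lemma lp_optimal_bfs_single_edge:
  assumes "u \<noteq> v"
  shows "lp_optimal_bfs {u, v} {{u, v}} (\<lambda>z. if z = v then 1 else 0)"
    (is "lp_optimal_bfs _ _ ?x")
  unfolding lp_optimal_bfs_def
proof (intro conjI allI impI)
  show "lp_feasible {u, v} {{u, v}} ?x"
    using assms by (auto simp: lp_feasible_def doubleton_eq_iff)
  show "lp_basic {u, v} {{u, v}} ?x"
    unfolding lp_basic_def
  proof (intro allI impI)
    fix y :: "nat \<Rightarrow> real"
    assume y: "(\<forall>z. z \<notin> {u, v} \<longrightarrow> y z = 0) \<and> (\<forall>z\<in>{u, v}. ?x z = 0 \<longrightarrow> y z = 0) \<and>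
      (\<forall>s t. {s, t} \<in> {{u, v}} \<longrightarrow> s \<noteq> t \<longrightarrow> ?x s + ?x t = 1 \<longrightarrow> y s + y t = 1)"
    then have outside: "\<forall>z. z \<notin> {u, v} \<longrightarrow> y z = 0"
      by (rule conjunct1)
    from y have "\<forall>z\<in>{u, v}. ?x z = 0 \<longrightarrow> y z = 0"
      by blast
    then have "y u = 0"
      using assms by simp
    from y have "{u, v} \<in> {{u, v}} \<longrightarrow> u \<noteq> v \<longrightarrow> ?x u + ?x v = 1 \<longrightarrow> y u + y v = 1"
      by blast
    then have "y u + y v = 1"
      using assms by simp
    have "y z = ?x z" for z
      using outside \<open>y u = 0\<close> \<open>y u + y v = 1\<close> assms by (cases "z = u"; cases "z = v") auto
    then show "y = ?x" ..
  qed
next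
  fix y assume "lp_feasible {u, v} {{u, v}} y"
  then show "(\<Sum>z\<in>{u, v}. ?x z) \<le> (\<Sum>z\<in>{u, v}. y z)"
    using assms by (auto simp: lp_feasible_def)
qed

lemma exact_vc_alg_empty:
  assumes "exact_vc_alg vc"
  shows "vc {} {} = {}"
proof -
  have "is_min_vertex_cover {} {} (vc {} {})"
    using assms by (simp add: exact_vc_alg_def simple_graph_def)
  then show ?thesis
    by (simp add: is_min_vertex_cover_def is_vertex_cover_def)
qed

lemma ratio_le_threshold_ratio:
  assumes "wf_instance V E D" "0 < expected_opt V E D"
    "lp_optimal_bfs (V - thr_M d V E D) (induced_edges E (V - thr_M d V E D)) x"
  shows "ereal (thr_expected_cost vc d V E D x / expected_opt V E D) \<le> threshold_ratio vc d"
  unfolding threshold_ratio_def using assms by (intro Sup_upper) auto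

lemma threshold_ratio_ge_star:
  assumes "0 < d" "d < 1" and vc: "exact_vc_alg vc" and "1 \<le> k"
  shows "ereal ((real k + 1) / (1 + real k * d)) \<le> threshold_ratio vc d"
proof -
  interpret S: star_instance "1 - d" d k
    using assms by unfold_locales auto
  have "d \<le> mand_prob S.V S.E S.D v" if "v \<in> S.V" for v
  proof (cases "v = 0")
    case False
    with that show ?thesis
      using S.mand_prob_leaf[of v] by (simp add: star_vertices_def)
  qed (simp add: S.mand_prob_centre_ge)
  then have M: "thr_M d S.V S.E S.D = S.V"
    unfolding thr_M_def by blast
  have no_edges: "induced_edges S.E {} = {}"
    by (auto simp: induced_edges_def star_edges_def)
  have bfs: "lp_optimal_bfs (S.V - thr_M d S.V S.E S.D) (induced_edges S.E (S.V - thr_M d S.V S.E S.D))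
      (\<lambda>_. 0)"
    using lp_optimal_bfs_empty by (simp add: M no_edges)
  have Q: "thr_Q vc d S.V S.E S.D (\<lambda>_. 0) = S.V"
    by (simp add: thr_Q_def M no_edges exact_vc_alg_empty[OF vc])
  have cost: "thr_expected_cost vc d S.V S.E S.D (\<lambda>_. 0) = real k + 1"
    unfolding thr_expected_cost_def Let_def Q Diff_cancel
    using prob_space.prob_space[OF S.prob_space_realizations]
    by (simp add: realizations_def star_vertices_def)
  have "(real k + 1) / (1 + real k * d) \<le> (real k + 1) / expected_opt S.V S.E S.D"
    using S.expected_opt_bounds by (intro divide_left_mono) auto
  also have "ereal \<dots> \<le> threshold_ratio vc d"
    unfolding cost[symmetric] using S.expected_opt_bounds(1) bfs
    by (intro ratio_le_threshold_ratio S.wf_instance_star) auto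
  finally show ?thesis
    by simp
qed

lemma threshold_ratio_ge_single_edge:
  assumes "0 < q" "q < d" "0 < r" "r < d" "d \<le> 1" and vc: "exact_vc_alg vc"
  shows "ereal ((1 + q) / (1 + r)) \<le> threshold_ratio vc d"
proof -
  interpret S: star_instance "1 - r" q 1
    using assms by unfold_locales auto
  \<comment> \<open>worst-case tie-break: the indicator of the centre is an optimal basic solution as well\<close>
  let ?x = "\<lambda>z::nat. if z = 1 then 1 else 0 :: real"
  have V: "S.V = {0, 1}" and E: "S.E = {{0, 1}}"
    by (auto simp: star_vertices_def star_edges_def)
  have "\<not> d \<le> mand_prob S.V S.E S.D v" if "v \<in> S.V" for v
  proof -
    have "v = 0 \<or> v = 1"
      using that V by blast
    then show ?thesis
      using assms S.mand_prob_leaf[of 1] S.mand_prob_centre_single_leaf by auto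
  qed
  then have M: "thr_M d S.V S.E S.D = {}"
    unfolding thr_M_def by blast
  have bfs: "lp_optimal_bfs (S.V - thr_M d S.V S.E S.D) (induced_edges S.E (S.V - thr_M d S.V S.E S.D)) ?x"
  proof -
    have "induced_edges S.E S.V = S.E"
      by (auto simp: induced_edges_def star_edges_def star_vertices_def)
    then show ?thesis
      unfolding M Diff_empty by (simp only: V E) (rule lp_optimal_bfs_single_edge; simp)
  qed
  have ones: "{v \<in> S.V. ?x v = 1} = {1}" and halves: "{v \<in> S.V. ?x v = 1/2} = {}"
    by (auto simp: star_vertices_def)
  have "induced_edges S.E {} = {}"
    by (auto simp: induced_edges_def star_edges_def)
  then have Q: "thr_Q vc d S.V S.E S.D ?x = {1}"
    unfolding thr_Q_def Let_def M Diff_empty ones halves by (simp add: exact_vc_alg_empty[OF vc])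
  have cost: "thr_expected_cost vc d S.V S.E S.D ?x = 1 + q"
    unfolding thr_expected_cost_def Let_def Q realizations_def by (rule S.expected_cost_leaf_then_centre) simp
  have "(1 + q) / (1 + r) \<le> (1 + q) / expected_opt S.V S.E S.D"
    using S.expected_opt_bounds assms by (intro divide_left_mono) auto
  also have "ereal \<dots> \<le> threshold_ratio vc d"
    unfolding cost[symmetric] using S.expected_opt_bounds(1) bfs
    by (intro ratio_le_threshold_ratio S.wf_instance_star) auto
  finally show ?thesis
    by simp
qed

lemma threshold_ratio_ge_inverse:
  assumes "0 < d" "d < 1" and "exact_vc_alg vc"
  shows "ereal (1 / d) \<le> threshold_ratio vc d"
proof (rule ereal_le_of_tendsto[where N = 1])
  have "(\<lambda>k. (real k + 1) / (1 + real k * d)) \<longlonglongrightarrow> inverse d"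
    using assms(1) by real_asymp
  then show "(\<lambda>k. (real k + 1) / (1 + real k * d)) \<longlonglongrightarrow> 1 / d"
    by (simp add: inverse_eq_divide)
qed (use assms threshold_ratio_ge_star in blast)

lemma threshold_ratio_ge_one_plus:
  assumes "0 < d" "d \<le> 1" and "exact_vc_alg vc"
  shows "ereal (1 + d) \<le> threshold_ratio vc d"
proof (rule ereal_le_of_tendsto[where N = 0])
  show "(\<lambda>n. (1 + (d - d / (real n + 2))) / (1 + d / (real n + 2))) \<longlonglongrightarrow> 1 + d"
    using assms(1) by real_asymp
next
  fix n :: nat
  have "0 < d / (real n + 2)" "d / (real n + 2) < d"
    using assms(1) by (auto simp: field_simps intro: add_pos_nonneg)
  then show "ereal ((1 + (d - d / (real n + 2))) / (1 + d / (real n + 2))) \<le> threshold_ratio vc d"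
    using assms by (intro threshold_ratio_ge_single_edge) auto
qed

lemma golden_ratio_le_max:
  fixes d :: real
  assumes "0 < d"
  shows "(1 + sqrt 5) / 2 \<le> max (1 + d) (1 / d)"
proof (cases "(1 + sqrt 5) / 2 \<le> 1 + d")
  case False
  then have "d * ((1 + sqrt 5) / 2) < (sqrt 5 - 1) / 2 * ((1 + sqrt 5) / 2)"
    by (intro mult_strict_right_mono) (auto intro: add_pos_nonneg)
  also have "\<dots> = 1"
    by (simp add: field_simps)
  finally have "(1 + sqrt 5) / 2 < 1 / d"
    using assms by (simp add: less_divide_eq mult.commute)
  then show ?thesis
    by linarith
qed (simp add: le_max_iff_disj)

theorem theoremB2:
  fixes d :: real and vc :: "nat set \<Rightarrow> nat set set \<Rightarrow> nat set"
  assumes "0 < d" and "d \<le> 1" and "exact_vc_alg vc"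
  shows "threshold_ratio vc d \<ge> ereal (max (1 + d) (1 / d)) \<and>
         threshold_ratio vc d \<ge> ereal ((1 + sqrt 5) / 2)"
proof -
  have one_plus: "ereal (1 + d) \<le> threshold_ratio vc d"
    using assms by (rule threshold_ratio_ge_one_plus)
  have "ereal (1 / d) \<le> threshold_ratio vc d"
  proof (cases "d < 1")
    case True
    then show ?thesis
      using assms threshold_ratio_ge_inverse by blast
  next
    case False
    then have "ereal (1 / d) \<le> ereal (1 + d)"
      using assms by simp
    then show ?thesis
      using one_plus by (rule order_trans)
  qed
  with one_plus have max: "ereal (max (1 + d) (1 / d)) \<le> threshold_ratio vc d"
    by (simp add: max_def)
  moreover have "ereal ((1 + sqrt 5) / 2) \<le> ereal (max (1 + d) (1 / d))"
    using golden_ratio_le_max[OF assms(1)] by (simp only: ereal_less_eq(3))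
  ultimately show ?thesis
    using order_trans by blast
qed

end
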